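(* For every integer $n \geq 1$, the discrete interval hypergraph $H_n$ satisfies $\mathrm{ch}_{cf}(H_n) \leq \lfloor \log_2 n \rfloor + 1$. That is, for every family $\{L_i\}_{i\in[n]}$ of sets of positive integers with $|L_i| \geq \lfloor \log_2 n\rfloor + 1$ for all $i$, there is a conflict-free coloring $C$ of $H_n$ with $C(i)\in L_i$ for all $i$.
   Context: For $n\ge 1$ let $[n]=\{1,\dots,n\}$ and for $s\le t$ in $[n]$ let $[s,t]=\{i : s\le i\le t\}$. The discrete interval hypergraph $H_n$ has vertex set $[n]$ and hyperedge set $\{[s,t] : s\le t,\ s,t\in[n]\}$. A coloring $C\colon V\to\mathbb{Z}_{>0}$ of a hypergraph $H=(V,\mathcal E)$ is conflict-free if every hyperedge $S\in\mathcal E$ contains a vertex whose color appears exactly once in $S$ (i.e., there is $i$ with $|S\cap C^{-1}(i)|=1$). Given a family $\mathcal L=\{L_v\}_{v\in V}$ of sets of positive integers, $H$ admits a coloring from $\mathcal L$ if the coloring satisfies $C(v)\in L_v$ for all $v$. $H$ is $k$-cf-choosable if for every family $\mathcal L$ with $|L_v|\ge k$ for all $v$, $H$ admits a conflict-free coloring from $\mathcal L$; the cf-choice number $\mathrm{ch}_{cf}(H)$ is the minimum such $k$. *)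

theory Defs
  imports Complex_Main
begin

definition interval_hypergraph_edges :: "nat \<Rightarrow> nat set set" where
  "interval_hypergraph_edges n = {{s..t} | s t. 1 \<le> s \<and> s \<le> t \<and> t \<le> n}"

definition conflict_free ::
  "'v set \<Rightarrow> 'v set set \<Rightarrow> ('v \<Rightarrow> nat) \<Rightarrow> bool" where
  "conflict_free V E C \<longleftrightarrow>
     (\<forall>v\<in>V. C v > 0) \<and>
     (\<forall>S\<in>E. \<exists>i. card (S \<inter> C -` {i}) = 1)"

definition colors_from ::
  "'v set \<Rightarrow> ('v \<Rightarrow> nat set) \<Rightarrow> ('v \<Rightarrow> nat) \<Rightarrow> bool" where
  "colors_from V L C \<longleftrightarrow> (\<forall>v\<in>V. C v \<in> L v)"

text \<open>|L v| >= k: an infinite list has size at least k for every k.\<close>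
definition cf_choosable ::
  "'v set \<Rightarrow> 'v set set \<Rightarrow> nat \<Rightarrow> bool" where
  "cf_choosable V E k \<longleftrightarrow>
     (\<forall>L. (\<forall>v\<in>V. L v \<subseteq> {0<..} \<and> (infinite (L v) \<or> card (L v) \<ge> k)) \<longrightarrow>
          (\<exists>C. conflict_free V E C \<and> colors_from V L C))"

end

theory Submission
  imports Defs
begin

(* Colour the middle vertex m of an interval of
   fewer than 2^(j+1) points with some colour c from its list, delete c from all
   other lists, and colour the two halves left and right of m recursively; each half
   has fewer than 2^j points and every list still has at least j colours.  An
   interval containing m sees c exactly once; an interval avoiding m lies inside one
   half and inherits a uniquely coloured vertex from that half's colouring. *)

definition unique_color :: "'v set \<Rightarrow> ('v \<Rightarrow> 'c) \<Rightarrow> bool" where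
  "unique_color S C \<longleftrightarrow> (\<exists>i. card (S \<inter> C -` {i}) = 1)"

definition large_list :: "nat \<Rightarrow> 'a set \<Rightarrow> bool" where
  "large_list k A \<longleftrightarrow> infinite A \<or> k \<le> card A"

lemma large_list_Diff_singleton:
  assumes "large_list (Suc k) A"
  shows "large_list k (A - {c})"
proof (cases "finite A")
  case True
  have "card A \<le> Suc (card (A - {c}))"
    using True by (cases "c \<in> A") (auto simp: card_Diff_singleton_if)
  then show ?thesis using assms True by (auto simp: large_list_def)
qed (use assms in \<open>auto simp: large_list_def\<close>)

lemma large_list_Suc_nonempty: "large_list (Suc k) A \<Longrightarrow> A \<noteq> {}"
  by (auto simp: large_list_def)

lemma unique_color_cong:
  assumes "\<And>v. v \<in> S \<Longrightarrow> C v = C' v"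
  shows "unique_color S C \<longleftrightarrow> unique_color S C'"
proof -
  have "S \<inter> C -` {i} = S \<inter> C' -` {i}" for i using assms by auto
  then show ?thesis by (simp add: unique_color_def)
qed

lemma glue_at_midpoint:
  fixes C1 C2 :: "nat \<Rightarrow> 'c" and m :: nat and c :: 'c
  defines "C \<equiv> \<lambda>v. if v < m then C1 v else if v = m then c else C2 v"
  assumes left: "\<And>s t. a \<le> s \<Longrightarrow> s \<le> t \<Longrightarrow> t < m \<Longrightarrow> unique_color {s..t} C1"
    and right: "\<And>s t. m < s \<Longrightarrow> s \<le> t \<Longrightarrow> t < b \<Longrightarrow> unique_color {s..t} C2"
    and avoid_left: "\<And>v. v \<in> {a..<m} \<Longrightarrow> C1 v \<noteq> c"
    and avoid_right: "\<And>v. v \<in> {m<..<b} \<Longrightarrow> C2 v \<noteq> c"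
    and st: "a \<le> s" "s \<le> t" "t < b"
  shows "unique_color {s..t} C"
proof -
  consider "s \<le> m \<and> m \<le> t" | "t < m" | "m < s" by linarith
  then show ?thesis
  proof cases
    case 1
    have "{s..t} \<inter> C -` {c} = {m}"
      using 1 st avoid_left avoid_right by (auto simp: C_def split: if_splits)
    then show ?thesis unfolding unique_color_def by (intro exI[of _ c]) simp
  next
    case 2
    then have "unique_color {s..t} C1" using left st by simp
    then show ?thesis using 2 by (subst unique_color_cong[of _ _ C1]) (auto simp: C_def)
  next
    case 3
    then have "unique_color {s..t} C2" using right st by simp
    then show ?thesis using 3 by (subst unique_color_cong[of _ _ C2]) (auto simp: C_def)
  qed
qed

lemma interval_cf_list_coloring:
  fixes L :: "nat \<Rightarrow> 'c set"
  assumes "b - a < 2 ^ j" and "\<And>v. v \<in> {a..<b} \<Longrightarrow> large_list j (L v)"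
  shows "\<exists>C. (\<forall>v\<in>{a..<b}. C v \<in> L v) \<and>
             (\<forall>s t. a \<le> s \<longrightarrow> s \<le> t \<longrightarrow> t < b \<longrightarrow> unique_color {s..t} C)"
  using assms
proof (induction j arbitrary: a b L)
  case 0
  then show ?case by auto
next
  case (Suc j)
  show ?case
  proof (cases "a < b")
    case False
    then show ?thesis by auto
  next
    case True
    define m where "m = (a + b) div 2"
    have m: "a \<le> m" "m < b" using True by (auto simp: m_def)
    obtain c where c: "c \<in> L m"
      using large_list_Suc_nonempty Suc.prems(2) m by fastforce
    define L' where "L' v = L v - {c}" for v
    have L': "large_list j (L' v)" if "v \<in> {a..<b}" for v
      unfolding L'_def by (rule large_list_Diff_singleton) (rule Suc.prems(2)[OF that])
    have halves: "m - a < 2 ^ j" "b - Suc m < 2 ^ j"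
      using Suc.prems(1) by (auto simp: m_def)
    obtain C1 where C1: "\<forall>v\<in>{a..<m}. C1 v \<in> L' v"
      "\<forall>s t. a \<le> s \<longrightarrow> s \<le> t \<longrightarrow> t < m \<longrightarrow> unique_color {s..t} C1"
      using Suc.IH[OF halves(1), of L'] L' m by auto
    obtain C2 where C2: "\<forall>v\<in>{Suc m..<b}. C2 v \<in> L' v"
      "\<forall>s t. Suc m \<le> s \<longrightarrow> s \<le> t \<longrightarrow> t < b \<longrightarrow> unique_color {s..t} C2"
      using Suc.IH[OF halves(2), of L'] L' m by auto
    define C where "C v = (if v < m then C1 v else if v = m then c else C2 v)" for v
    have "\<forall>v\<in>{a..<b}. C v \<in> L v"
      using C1(1) C2(1) c by (auto simp: C_def L'_def)
    moreover have "unique_color {s..t} C" if "a \<le> s" "s \<le> t" "t < b" for s t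
      unfolding C_def
      by (rule glue_at_midpoint[where a = a and b = b])
         (use C1 C2 that in \<open>auto simp: L'_def\<close>)
    ultimately show ?thesis by blast
  qed
qed

lemma less_power_floor_log2:
  assumes "n \<ge> 1"
  shows "n < 2 ^ (nat \<lfloor>log 2 (real n)\<rfloor> + 1)"
proof -
  have "\<lfloor>log 2 (real n)\<rfloor> = int (nat \<lfloor>log 2 (real n)\<rfloor>)" using assms by simp
  then show ?thesis
    using floor_log_nat_eq_powr_iff[of 2 n "nat \<lfloor>log 2 (real n)\<rfloor>"] assms by simp
qed

theorem proposition2p1:
  fixes n :: nat
  assumes "n \<ge> 1"
  shows "cf_choosable {1..n} (interval_hypergraph_edges n) (nat \<lfloor>log 2 (real n)\<rfloor> + 1)"
  unfolding cf_choosable_def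
proof (intro allI impI)
  let ?k = "nat \<lfloor>log 2 (real n)\<rfloor> + 1"
  fix L :: "nat \<Rightarrow> nat set"
  assume lists: "\<forall>v\<in>{1..n}. L v \<subseteq> {0<..} \<and> (infinite (L v) \<or> card (L v) \<ge> ?k)"
  have "Suc n - 1 < 2 ^ ?k" using less_power_floor_log2 assms by simp
  moreover have "large_list ?k (L v)" if "v \<in> {1..<Suc n}" for v
    using lists that by (auto simp: large_list_def)
  ultimately obtain C where C: "\<forall>v\<in>{1..<Suc n}. C v \<in> L v"
      "\<forall>s t. 1 \<le> s \<longrightarrow> s \<le> t \<longrightarrow> t < Suc n \<longrightarrow> unique_color {s..t} C"
    using interval_cf_list_coloring by blast
  have "conflict_free {1..n} (interval_hypergraph_edges n) C"
    using C lists by (fastforce simp: conflict_free_def interval_hypergraph_edges_def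
                                       unique_color_def)
  moreover have "colors_from {1..n} L C" using C(1) by (auto simp: colors_from_def)
  ultimately show "\<exists>C. conflict_free {1..n} (interval_hypergraph_edges n) C \<and> colors_from {1..n} L C"
    by blast
qed

end
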